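(* Let $A,B\in\mathrm{SL}_2\mathbb{R}$ be noncommuting, with trace $\ge 2$, coherently oriented, and let $B$ be hyperbolic. (1) Suppose $A$ is hyperbolic as well and the translation axes of $A$ and $B$ are asymptotically parallel (distinct but sharing an ideal endpoint). Then: (1.1) if $[a]\ne[b]$, the only optimal word is the one among $a$ and $b$ corresponding to the matrix with larger trace; (1.2) if $[a]=[b]$ and $I^+\cap I^-=\emptyset$, then every word is maximal, so that every Lyndon word is optimal (the complete set of optimal words is the set of all Lyndon words); if instead $[a]=[b]$ and $I^+\cap I^-\neq\emptyset$ (necessarily a singleton), then $a$ and $b$ are both optimal and there are no other optimal words. (2) If $A$ is parabolic with fixed point $\alpha^+=\alpha^-\in\{\beta^+,\beta^-\}$, then $b$ is the only optimal word.
   Context: Hyperbolic means trace $>2$, with attracting/repelling fixed points $\alpha^\pm$ (for $A$), $\beta^\pm$ (for $B$) in $\partial\mathcal{H}=\mathbb{P}^1\mathbb{R}$; a parabolic matrix (trace $2$, $\neq I$) has a unique fixed point, denoted $\alpha^+=\alpha^-$. The translation axis of a hyperbolic matrix is the geodesic joining its fixed points. Coherent orientation: with $\partial\mathcal{H}$ cyclically ordered and $[\alpha,\beta]$ the closed counterclockwise interval from $\alpha$ to $\beta$, let $I^+=\{\alpha^+\}$ if $\alpha^+=\beta^+$, and otherwise the one of $[\alpha^+,\beta^+],[\beta^+,\alpha^+]$ mapped into itself by both $A$ and $B$ (if it exists); define $I^-$ likewise with $A^{-1},B^{-1},\alpha^-,\beta^-$; the pair is coherently oriented if both exist. Words: $F_2^+$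 is the free semigroup of nonempty words over $\{a,b\}$, $|w|$ the length, $\phi(a)=A,\phi(b)=B$ extended to a homomorphism, $[w]=\mathrm{tr}(\phi(w))$. Define $w\preceq u$ iff $[w^{|u|}]\le[u^{|w|}]$; $w$ is maximal if $u\preceq w$ for all $u$. A Lyndon word is one strictly smaller lexicographically ($a<b$) than each of its proper rotations. A complete set of optimal words is a set of pairwise distinct maximal Lyndon words such that every maximal word is a power of a rotation of one of them; it is unique if it exists, and its elements are the optimal words. *)

theory Defs
  imports "HOL-Analysis.Analysis"
begin

type_synonym mat2 = "real^2^2"

text \<open>Points of the ideal boundary P^1(R) = R \<union> {\<infinity>}.\<close>
datatype pt = Fin real | Infty

definition vec_of :: "pt \<Rightarrow> real^2" where
  "vec_of p = (case p of Fin x \<Rightarrow> (\<chi> i. if i = 1 then x else 1)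
                       | Infty \<Rightarrow> (\<chi> i. if i = 1 then 1 else 0))"

definition pt_of :: "real^2 \<Rightarrow> pt" where
  "pt_of v = (if v $ 2 = 0 then Infty else Fin (v $ 1 / v $ 2))"

definition mobius :: "mat2 \<Rightarrow> pt \<Rightarrow> pt" where
  "mobius M p = pt_of (M *v vec_of p)"

definition fp_plus :: "mat2 \<Rightarrow> pt" where
  "fp_plus M = (if trace M > 2
     then (THE p. \<exists>v l. v \<noteq> 0 \<and> M *v v = l *\<^sub>R v \<and> \<bar>l\<bar> > 1 \<and> p = pt_of v)
     else (THE p. mobius M p = p))"

definition fp_minus :: "mat2 \<Rightarrow> pt" where
  "fp_minus M = (if trace M > 2
     then (THE p. \<exists>v l. v \<noteq> 0 \<and> M *v v = l *\<^sub>R v \<and> \<bar>l\<bar> < 1 \<and> p = pt_of v)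
     else (THE p. mobius M p = p))"

text \<open>Closed cyclic interval from p to q (orientation: increasing along R, through \<infinity>).
  Only used for p \<noteq> q.\<close>
fun cc :: "pt \<Rightarrow> pt \<Rightarrow> pt set" where
  "cc (Fin x) (Fin y) = (if x \<le> y then {Fin t | t. x \<le> t \<and> t \<le> y}
                         else {Fin t | t. x \<le> t} \<union> {Infty} \<union> {Fin t | t. t \<le> y})"
| "cc (Fin x) Infty = {Fin t | t. x \<le> t} \<union> {Infty}"
| "cc Infty (Fin y) = {Infty} \<union> {Fin t | t. t \<le> y}"
| "cc Infty Infty = {Infty}"

definition invariant2 :: "mat2 \<Rightarrow> mat2 \<Rightarrow> pt set \<Rightarrow> bool" where
  "invariant2 A B I \<longleftrightarrow> mobius A ` I \<subseteq> I \<and> mobius B ` I \<subseteq> I"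

definition I_of :: "mat2 \<Rightarrow> mat2 \<Rightarrow> pt \<Rightarrow> pt \<Rightarrow> pt set" where
  "I_of A B p q = (if p = q then {p}
      else (SOME I. I \<in> {cc p q, cc q p} \<and> invariant2 A B I))"

definition I_plus :: "mat2 \<Rightarrow> mat2 \<Rightarrow> pt set" where
  "I_plus A B = I_of A B (fp_plus A) (fp_plus B)"

definition I_minus :: "mat2 \<Rightarrow> mat2 \<Rightarrow> pt set" where
  "I_minus A B = I_of (matrix_inv A) (matrix_inv B) (fp_minus A) (fp_minus B)"

definition coherent :: "mat2 \<Rightarrow> mat2 \<Rightarrow> bool" where
  "coherent A B \<longleftrightarrow>
     (fp_plus A = fp_plus B \<or>
        (\<exists>I \<in> {cc (fp_plus A) (fp_plus B), cc (fp_plus B) (fp_plus A)}. invariant2 A B I)) \<and>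
     (fp_minus A = fp_minus B \<or>
        (\<exists>I \<in> {cc (fp_minus A) (fp_minus B), cc (fp_minus B) (fp_minus A)}.
            invariant2 (matrix_inv A) (matrix_inv B) I))"

text \<open>Words over {a,b} (a < b); nonempty lists represent F_2^+.\<close>
datatype letter = La | Lb

definition letter_less :: "(letter \<times> letter) set" where
  "letter_less = {(La, Lb)}"

definition gmat :: "mat2 \<Rightarrow> mat2 \<Rightarrow> letter \<Rightarrow> mat2" where
  "gmat A B x = (case x of La \<Rightarrow> A | Lb \<Rightarrow> B)"

definition phi :: "mat2 \<Rightarrow> mat2 \<Rightarrow> letter list \<Rightarrow> mat2" where
  "phi A B w = foldr (\<lambda>x M. gmat A B x ** M) w (mat 1)"

definition wtr :: "mat2 \<Rightarrow> mat2 \<Rightarrow> letter list \<Rightarrow> real" where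
  "wtr A B w = trace (phi A B w)"

definition wpow :: "letter list \<Rightarrow> nat \<Rightarrow> letter list" where
  "wpow w n = concat (replicate n w)"

definition wle :: "mat2 \<Rightarrow> mat2 \<Rightarrow> letter list \<Rightarrow> letter list \<Rightarrow> bool" where
  "wle A B w u \<longleftrightarrow> wtr A B (wpow w (length u)) \<le> wtr A B (wpow u (length w))"

definition maximal :: "mat2 \<Rightarrow> mat2 \<Rightarrow> letter list \<Rightarrow> bool" where
  "maximal A B w \<longleftrightarrow> w \<noteq> [] \<and> (\<forall>u. u \<noteq> [] \<longrightarrow> wle A B u w)"

definition lyndon :: "letter list \<Rightarrow> bool" where
  "lyndon w \<longleftrightarrow> w \<noteq> [] \<and> (\<forall>k. 0 < k \<and> k < length w \<longrightarrow> (w, rotate k w) \<in> lexord letter_less)"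

text \<open>S is a complete set of optimal words (such a set is unique if it exists;
  its elements are the optimal words).\<close>
definition complete_optimal :: "mat2 \<Rightarrow> mat2 \<Rightarrow> letter list set \<Rightarrow> bool" where
  "complete_optimal A B S \<longleftrightarrow>
     (\<forall>w \<in> S. lyndon w \<and> maximal A B w) \<and>
     (\<forall>w. maximal A B w \<longrightarrow> (\<exists>v \<in> S. \<exists>k n. n \<ge> 1 \<and> w = wpow (rotate k v) n))"

end

theory Submission
  imports Defs
begin

text \<open>If A and B share a fixed point of the projective line, a representative e of it is a
  common eigenvector, with eigenvalues \<alpha>, \<beta> > 0. If the word w has m letters a and n letters b,
  the matrix of w has eigenvalue \<alpha>^m \<beta>^n at e, and since its determinant is 1 its trace is
  2 cosh (m ln \<alpha> + n ln \<beta>). Comparing words therefore amounts to comparing the averages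
  |m ln \<alpha> + n ln \<beta>| / (m + n), and the maximal words are read off from |ln \<alpha>|, |ln \<beta>| and the
  sign of ln \<alpha> ln \<beta>: if the traces differ only powers of the dominant letter are maximal; if they
  agree, every word is maximal when the signs agree and only powers of single letters are maximal
  when they differ.

  The sign is geometric: it is positive iff the shared point is attracting for both matrices or
  repelling for both. A hyperbolic matrix cannot map into itself an arc that starts at its
  attracting point and contains its repelling point. Applied to the invariant arcs of a coherent
  pair, this gives I_plus A B \<inter> I_minus A B = {} in the first case, and in the second case the two
  arcs meet exactly in the shared point.\<close>

section \<open>Vectors of the plane and the projective line\<close>

lemma vec2_eq_iff: "(x::real^2) = y \<longleftrightarrow> x$1 = y$1 \<and> x$2 = y$2"
  by (simp add: vec_eq_iff forall_2)

lemma vec2_neq_0_iff: "(x::real^2) \<noteq> 0 \<longleftrightarrow> x$1 \<noteq> 0 \<or> x$2 \<noteq> 0"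
  by (simp add: vec_eq_iff forall_2)

lemma mat2_mult_vec_nth:
  "((M::mat2) *v x)$1 = M$1$1 * x$1 + M$1$2 * x$2"
  "((M::mat2) *v x)$2 = M$2$1 * x$1 + M$2$2 * x$2"
  by (simp_all add: matrix_vector_mult_def sum_2)

lemma trace_2: "trace (M::mat2) = M$1$1 + M$2$2"
  by (simp add: trace_def sum_2)

definition wedge :: "real^2 \<Rightarrow> real^2 \<Rightarrow> real" where
  "wedge x y = x$1 * y$2 - x$2 * y$1"

lemma wedge_bilinear:
  "wedge (x + y) z = wedge x z + wedge y z" "wedge x (y + z) = wedge x y + wedge x z"
  "wedge (a *\<^sub>R x) y = a * wedge x y" "wedge x (a *\<^sub>R y) = a * wedge x y"
  by (simp_all add: wedge_def algebra_simps)

lemma wedge_self [simp]: "wedge x x = 0"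
  by (simp add: wedge_def)

lemma wedge_commute: "wedge y x = - wedge x y"
  by (simp add: wedge_def)

lemma wedge_eq_0_imp_parallel:
  assumes "wedge x y = 0" "y \<noteq> 0"
  obtains k where "x = k *\<^sub>R y"
proof (cases "y$1 = 0")
  case True
  then have "y$2 \<noteq> 0" using assms(2) by (simp add: vec2_neq_0_iff)
  then show ?thesis
    using True assms(1) that[of "x$2 / y$2"] by (simp add: vec2_eq_iff wedge_def field_simps)
next
  case False
  then show ?thesis
    using assms(1) that[of "x$1 / y$1"] by (simp add: vec2_eq_iff wedge_def field_simps)
qed

lemma wedge_decomposition:
  assumes "wedge u v \<noteq> 0"
  shows "w = (wedge w v / wedge u v) *\<^sub>R u + (wedge u w / wedge u v) *\<^sub>R v"
proof -
  have "wedge u v *\<^sub>R w = wedge w v *\<^sub>R u + wedge u w *\<^sub>R v"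
    by (simp add: vec2_eq_iff wedge_def algebra_simps)
  then show ?thesis
    using assms by (simp add: vec2_eq_iff field_simps)
qed

lemma vec_of_nth [simp]:
  "vec_of (Fin x) $ 1 = x" "vec_of (Fin x) $ 2 = 1"
  "vec_of Infty $ 1 = 1" "vec_of Infty $ 2 = 0"
  by (simp_all add: vec_of_def)

lemma vec_of_neq_0: "vec_of p \<noteq> 0"
  by (cases p) (auto simp: vec2_neq_0_iff)

lemma pt_of_vec_of [simp]: "pt_of (vec_of p) = p"
  by (cases p) (auto simp: pt_of_def)

lemma pt_of_scaleR: "c \<noteq> 0 \<Longrightarrow> pt_of (c *\<^sub>R x) = pt_of x"
  by (simp add: pt_of_def)

lemma vec_of_pt_of:
  assumes "x \<noteq> 0"
  obtains c where "c \<noteq> 0" "vec_of (pt_of x) = c *\<^sub>R x"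
proof (cases "x$2 = 0")
  case True
  then have "x$1 \<noteq> 0" using assms by (simp add: vec2_neq_0_iff)
  then show ?thesis
    using True that[of "1 / x$1"] by (simp add: pt_of_def vec2_eq_iff)
next
  case False
  then show ?thesis
    using that[of "1 / x$2"] by (simp add: pt_of_def vec2_eq_iff)
qed

lemma pt_of_eq_iff_wedge_eq_0:
  "x \<noteq> 0 \<Longrightarrow> y \<noteq> 0 \<Longrightarrow> pt_of x = pt_of y \<longleftrightarrow> wedge x y = 0"
  by (auto simp: vec2_neq_0_iff pt_of_def wedge_def field_simps split: if_splits)

lemma wedge_vec_of_eq_0_iff [simp]: "wedge (vec_of p) (vec_of q) = 0 \<longleftrightarrow> p = q"
  by (metis pt_of_eq_iff_wedge_eq_0 pt_of_vec_of vec_of_neq_0)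

lemma mobius_pt_of:
  assumes "x \<noteq> 0"
  shows "mobius M (pt_of x) = pt_of (M *v x)"
proof -
  obtain c where "c \<noteq> 0" "vec_of (pt_of x) = c *\<^sub>R x"
    using vec_of_pt_of assms by blast
  then show ?thesis
    by (simp add: mobius_def matrix_vector_mult_scaleR pt_of_scaleR)
qed

section \<open>Eigenvectors and fixed points\<close>

lemma cayley_hamilton_2: "(M::mat2) *v (M *v v) = trace M *\<^sub>R (M *v v) - det M *\<^sub>R v"
  by (simp add: vec2_eq_iff mat2_mult_vec_nth trace_2 det_2 algebra_simps)

lemma eigenvalue_char_poly:
  fixes M :: mat2
  assumes "v \<noteq> 0" "M *v v = l *\<^sub>R v"
  shows "l\<^sup>2 - trace M * l + det M = 0"
proof -
  have "(l * l) *\<^sub>R v = (trace M * l - det M) *\<^sub>R v"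
    using cayley_hamilton_2[of M v] assms(2)
    by (simp add: algebra_simps)
  then show ?thesis
    using assms(1) by (simp add: power2_eq_square)
qed

lemma eigenvalue_add_inverse_eq_trace:
  fixes M :: mat2
  assumes "det M = 1" "v \<noteq> 0" "M *v v = l *\<^sub>R v"
  shows "trace M = l + 1 / l"
proof -
  have "l\<^sup>2 - trace M * l + 1 = 0"
    using eigenvalue_char_poly[OF assms(2,3)] assms(1) by simp
  moreover from this have "l \<noteq> 0" by auto
  ultimately show ?thesis by (simp add: field_simps power2_eq_square)
qed

lemma ex_eigenvector:
  fixes M :: mat2
  assumes "l\<^sup>2 - trace M * l + det M = 0" "M \<noteq> l *\<^sub>R mat 1"
  obtains v where "v \<noteq> 0" "M *v v = l *\<^sub>R v"
proof -
  have char: "(M$1$1 - l) * (M$2$2 - l) = M$1$2 * M$2$1"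
    using assms(1) by (simp add: trace_2 det_2 algebra_simps power2_eq_square)
  have "M$1$2 \<noteq> 0 \<or> M$1$1 \<noteq> l \<or> M$2$1 \<noteq> 0 \<or> M$2$2 \<noteq> l"
    using assms(2) by (auto simp: vec_eq_iff forall_2 mat_def)
  then consider "M$1$2 \<noteq> 0 \<or> M$1$1 \<noteq> l" | "M$2$1 \<noteq> 0 \<or> M$2$2 \<noteq> l"
    by blast
  then show ?thesis
  proof cases
    case 1
    let ?v = "\<chi> i. if i = 1 then M$1$2 else l - M$1$1"
    show ?thesis
      by (rule that[of ?v]) (use 1 char in \<open>auto simp: vec2_eq_iff mat2_mult_vec_nth algebra_simps\<close>)
  next
    case 2
    let ?v = "\<chi> i. if i = 1 then l - M$2$2 else M$2$1"
    show ?thesis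
      by (rule that[of ?v]) (use 2 char in \<open>auto simp: vec2_eq_iff mat2_mult_vec_nth algebra_simps\<close>)
  qed
qed

lemma eigenvectors_pt_of_eq:
  fixes M :: mat2
  assumes "M \<noteq> l *\<^sub>R mat 1" "u \<noteq> 0" "v \<noteq> 0" "M *v u = l *\<^sub>R u" "M *v v = l *\<^sub>R v"
  shows "pt_of u = pt_of v"
proof (rule ccontr)
  assume "pt_of u \<noteq> pt_of v"
  then have nz: "wedge u v \<noteq> 0"
    using pt_of_eq_iff_wedge_eq_0 assms(2,3) by blast
  have "M *v w = l *\<^sub>R w" for w
  proof -
    obtain a b where "w = a *\<^sub>R u + b *\<^sub>R v"
      using wedge_decomposition[OF nz] by blast
    then show ?thesis
      using assms(4,5)
      by (simp add: matrix_vector_right_distrib matrix_vector_mult_scaleR scaleR_add_right mult.commute)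
  qed
  then have "M = l *\<^sub>R mat 1"
    by (simp add: matrix_eq flip: scaleR_matrix_vector_assoc)
  then show False using assms(1) by simp
qed

lemma eigenvector_pt_of_eq:
  fixes M :: mat2
  assumes "x \<noteq> 0" "y \<noteq> 0" "pt_of x = pt_of y" "M *v y = c *\<^sub>R y"
  shows "M *v x = c *\<^sub>R x"
proof -
  obtain k where "x = k *\<^sub>R y"
    using assms(1-3) pt_of_eq_iff_wedge_eq_0 wedge_eq_0_imp_parallel by metis
  then show ?thesis
    using assms(4) by (simp add: matrix_vector_mult_scaleR)
qed

lemma det_1_neq_scaleR_mat_1:
  fixes M :: mat2
  assumes "det M = 1" "c\<^sup>2 \<noteq> 1"
  shows "M \<noteq> c *\<^sub>R mat 1"
  using assms by (auto simp: det_2 mat_def power2_eq_square)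

lemma gt_2_eq_add_inverse:
  fixes t :: real
  assumes "t > 2"
  obtains l where "l > 1" "t = l + 1 / l"
proof -
  have "2\<^sup>2 < t\<^sup>2"
    by (rule power_strict_mono) (use assms in auto)
  define s where "s = sqrt (t\<^sup>2 - 4)"
  have s: "s \<ge> 0" "s\<^sup>2 = t\<^sup>2 - 4"
    using \<open>2\<^sup>2 < t\<^sup>2\<close> by (simp_all add: s_def)
  define l where "l = (t + s) / 2"
  have "l > 1"
    using assms s(1) by (simp add: l_def)
  moreover have "l * ((t - s) / 2) = 1"
    using s(2) by (simp add: l_def algebra_simps power2_eq_square)
  then have "t = l + 1 / l"
    using \<open>l > 1\<close> by (simp add: l_def field_simps)
  ultimately show ?thesis
    using that by blast
qed

lemma eigenvalue_eq_or_inverse: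
  fixes M :: mat2
  assumes "det M = 1" "trace M = l + 1 / l" "l \<noteq> 0" "v \<noteq> 0" "M *v v = l' *\<^sub>R v"
  shows "l' = l \<or> l' = 1 / l"
proof -
  have "(l' - l) * (l' - 1 / l) = 0"
    using eigenvalue_char_poly[OF assms(4,5)] assms(1-3) by (simp add: field_simps power2_eq_square)
  then show ?thesis
    by simp
qed

lemma ex_eigenvector_det_1:
  fixes M :: mat2
  assumes "det M = 1" "trace M = l + 1 / l" "l \<noteq> 0" "l\<^sup>2 \<noteq> 1"
  obtains v where "v \<noteq> 0" "M *v v = l *\<^sub>R v"
proof (rule ex_eigenvector)
  show "l\<^sup>2 - trace M * l + det M = 0"
    using assms(1-3) by (simp add: field_simps power2_eq_square)
  show "M \<noteq> l *\<^sub>R mat 1"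
    using det_1_neq_scaleR_mat_1 assms(1,4) .
qed

lemma the_eigenline:
  fixes M :: mat2 and P :: "real \<Rightarrow> bool"
  assumes "u \<noteq> 0" "M *v u = l *\<^sub>R u" "P l" "M \<noteq> l *\<^sub>R mat 1"
    and "\<And>v l'. v \<noteq> 0 \<Longrightarrow> M *v v = l' *\<^sub>R v \<Longrightarrow> P l' \<Longrightarrow> l' = l"
  shows "(THE p. \<exists>v l. v \<noteq> 0 \<and> M *v v = l *\<^sub>R v \<and> P l \<and> p = pt_of v) = pt_of u"
proof (rule the_equality)
  show "\<exists>v l. v \<noteq> 0 \<and> M *v v = l *\<^sub>R v \<and> P l \<and> pt_of u = pt_of v"
    using assms(1-3) by blast
next
  fix p assume "\<exists>v l. v \<noteq> 0 \<and> M *v v = l *\<^sub>R v \<and> P l \<and> p = pt_of v"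
  then obtain v l' where "v \<noteq> 0" "M *v v = l' *\<^sub>R v" "P l'" "p = pt_of v"
    by blast
  then show "p = pt_of u"
    using assms(5) eigenvectors_pt_of_eq[OF assms(4) _ assms(1) _ assms(2)] by metis
qed

lemma hyperbolic_fixed_points:
  fixes M :: mat2
  assumes det: "det M = 1" and hyperbolic: "trace M > 2"
  obtains l where "l > 1"
    "M *v vec_of (fp_plus M) = l *\<^sub>R vec_of (fp_plus M)"
    "M *v vec_of (fp_minus M) = (1 / l) *\<^sub>R vec_of (fp_minus M)"
proof -
  obtain l where "l > 1" and trace: "trace M = l + 1 / l"
    using gt_2_eq_add_inverse[OF hyperbolic] .
  have "1 < l\<^sup>2"
    using \<open>l > 1\<close> by simp
  then have "l\<^sup>2 \<noteq> 1" "(1 / l)\<^sup>2 \<noteq> 1"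
    by (simp_all add: power_one_over)
  moreover have "l \<noteq> 0" "1 / l \<noteq> 0" "trace M = 1 / l + 1 / (1 / l)"
    using \<open>l > 1\<close> trace by simp_all
  ultimately obtain u v where
    u: "u \<noteq> 0" "M *v u = l *\<^sub>R u" and v: "v \<noteq> 0" "M *v v = (1 / l) *\<^sub>R v"
    using ex_eigenvector_det_1[OF det] trace by metis
  have other: "l' = l \<or> l' = 1 / l" if "w \<noteq> 0" "M *v w = l' *\<^sub>R w" for w l'
    using eigenvalue_eq_or_inverse[OF det trace _ that] \<open>l > 1\<close> by simp
  have "fp_plus M = (THE p. \<exists>v l. v \<noteq> 0 \<and> M *v v = l *\<^sub>R v \<and> 1 < \<bar>l\<bar> \<and> p = pt_of v)"
    using hyperbolic by (simp add: fp_plus_def)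
  also have "\<dots> = pt_of u"
  proof (rule the_eigenline[OF u])
    show "l' = l" if "w \<noteq> 0" "M *v w = l' *\<^sub>R w" "1 < \<bar>l'\<bar>" for w l'
      using other[OF that(1,2)] that(3) \<open>l > 1\<close> by auto
  qed (use \<open>l > 1\<close> det_1_neq_scaleR_mat_1[OF det \<open>l\<^sup>2 \<noteq> 1\<close>] in auto)
  finally have "fp_plus M = pt_of u" .
  have "fp_minus M = (THE p. \<exists>v l. v \<noteq> 0 \<and> M *v v = l *\<^sub>R v \<and> \<bar>l\<bar> < 1 \<and> p = pt_of v)"
    using hyperbolic by (simp add: fp_minus_def)
  also have "\<dots> = pt_of v"
  proof (rule the_eigenline[OF v])
    show "l' = 1 / l" if "w \<noteq> 0" "M *v w = l' *\<^sub>R w" "\<bar>l'\<bar> < 1" for w l'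
      using other[OF that(1,2)] that(3) \<open>l > 1\<close> by auto
  qed (use \<open>l > 1\<close> det_1_neq_scaleR_mat_1[OF det \<open>(1 / l)\<^sup>2 \<noteq> 1\<close>] in auto)
  finally have "fp_minus M = pt_of v" .
  show ?thesis
    using that[OF \<open>l > 1\<close>] \<open>fp_plus M = pt_of u\<close> \<open>fp_minus M = pt_of v\<close>
      eigenvector_pt_of_eq[OF vec_of_neq_0] u v by simp
qed

lemma hyperbolic_fp_plus_neq_fp_minus:
  fixes M :: mat2
  assumes "det M = 1" "trace M > 2"
  shows "fp_plus M \<noteq> fp_minus M"
proof
  assume eq: "fp_plus M = fp_minus M"
  obtain l where "l > 1"
    "M *v vec_of (fp_plus M) = l *\<^sub>R vec_of (fp_plus M)"
    "M *v vec_of (fp_minus M) = (1 / l) *\<^sub>R vec_of (fp_minus M)"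
    using hyperbolic_fixed_points[OF assms] .
  then have "l = 1 / l"
    using eq vec_of_neq_0 by (metis scaleR_cancel_right)
  then show False
    using \<open>l > 1\<close> less_1_mult[of l l] by (simp add: field_simps)
qed

lemma parabolic_fixed_point:
  fixes M :: mat2
  assumes det: "det M = 1" and parabolic: "trace M = 2" "M \<noteq> mat 1"
  shows "M *v vec_of (fp_plus M) = vec_of (fp_plus M)"
proof -
  have not_scalar: "M \<noteq> 1 *\<^sub>R mat 1"
    using parabolic by simp
  obtain u where u: "u \<noteq> 0" "M *v u = 1 *\<^sub>R u"
    using ex_eigenvector[OF _ not_scalar] det parabolic by force
  have "fp_plus M = (THE p. mobius M p = p)"
    using parabolic by (simp add: fp_plus_def)
  also have "\<dots> = pt_of u"
  proof (rule the_equality)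
    show "mobius M (pt_of u) = pt_of u"
      using u by (simp add: mobius_pt_of)
  next
    fix p assume fixed: "mobius M p = p"
    have "wedge (M *v vec_of p) (vec_of p) = 0"
    proof (cases "M *v vec_of p = 0")
      case False
      then show ?thesis
        using fixed pt_of_eq_iff_wedge_eq_0[OF False vec_of_neq_0, of p]
        by (simp add: mobius_def)
    qed (simp add: wedge_def)
    then obtain k where k: "M *v vec_of p = k *\<^sub>R vec_of p"
      using wedge_eq_0_imp_parallel vec_of_neq_0 by blast
    have "(k - 1)\<^sup>2 = 0"
      using eigenvalue_char_poly[OF vec_of_neq_0 k] det parabolic
      by (simp add: power2_eq_square algebra_simps)
    then have "M *v vec_of p = 1 *\<^sub>R vec_of p"
      using k by simp
    then show "p = pt_of u"
      using eigenvectors_pt_of_eq[OF not_scalar vec_of_neq_0 u(1) _ u(2)] by simp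
  qed
  finally show ?thesis
    using eigenvector_pt_of_eq[OF vec_of_neq_0 u(1) _ u(2)] by simp
qed

lemma matrix_inv_eigenvector:
  fixes M :: mat2
  assumes "det M \<noteq> 0" "M *v v = c *\<^sub>R v" "c \<noteq> 0"
  shows "matrix_inv M *v v = (1 / c) *\<^sub>R v"
proof -
  have "\<exists>M'. M ** M' = mat 1 \<and> M' ** M = mat 1"
    using assms(1) invertible_det_nz invertible_def by blast
  then have "matrix_inv M ** M = mat 1"
    unfolding matrix_inv_def by (rule someI2_ex) simp
  then have "c *\<^sub>R (matrix_inv M *v v) = v"
    using assms(2) by (metis matrix_vector_mul_assoc matrix_vector_mul_lid matrix_vector_mult_scaleR)
  then show ?thesis
    using assms(3) by (metis scaleR_scaleR nonzero_divide_eq_eq scaleR_one)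
qed

section \<open>Arcs and cyclic orientation\<close>

lemma cc_endpoints: "p \<in> cc p q" "q \<in> cc p q"
  by (cases p; cases q; auto)+

lemma cc_mem:
  "Fin z \<in> cc (Fin x) (Fin y) \<longleftrightarrow> (if x \<le> y then x \<le> z \<and> z \<le> y else x \<le> z \<or> z \<le> y)"
  "Infty \<in> cc (Fin x) (Fin y) \<longleftrightarrow> y < x"
  "Fin z \<in> cc (Fin x) Infty \<longleftrightarrow> x \<le> z"
  "Infty \<in> cc (Fin x) Infty"
  "Fin z \<in> cc Infty (Fin y) \<longleftrightarrow> z \<le> y"
  "Infty \<in> cc Infty (Fin y)"
  "Fin z \<notin> cc Infty Infty"
  "Infty \<in> cc Infty Infty"
  by auto

lemma arcs_with_common_endpoint_inter:
  assumes "r \<noteq> p" "r \<noteq> q" "p \<noteq> q"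
    and "I \<in> {cc r q, cc q r}" "p \<notin> I" and "J \<in> {cc p r, cc r p}" "q \<notin> J"
  shows "I \<inter> J = {r}"
proof -
  have "z = r" if "z \<in> I" "z \<in> J" for z
    using assms that
    by (elim insertE emptyE; hypsubst; cases r; cases p; cases q; cases z;
        simp only: cc_mem pt.inject pt.distinct simp_thms split: if_splits; linarith)
  then show ?thesis
    using assms(4,6) cc_endpoints by auto
qed

text \<open>The sign of orient3 x y z is the cyclic orientation of the points pt_of x, pt_of y, pt_of z
  of the projective line; rescaling the representatives only multiplies it by a square.\<close>

definition orient3 :: "real^2 \<Rightarrow> real^2 \<Rightarrow> real^2 \<Rightarrow> real" where
  "orient3 x y z = wedge x y * wedge y z * wedge z x"

lemma orient3_scaleR: "orient3 (a *\<^sub>R x) (b *\<^sub>R y) (c *\<^sub>R z) = (a * b * c)\<^sup>2 * orient3 x y z"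
  by (simp add: orient3_def wedge_bilinear power2_eq_square algebra_simps)

lemma orient3_reverse: "orient3 z y x = - orient3 x y z"
  by (simp add: orient3_def wedge_def algebra_simps)

lemma orient3_vec_of_eq_0_iff:
  "orient3 (vec_of p) (vec_of q) (vec_of r) = 0 \<longleftrightarrow> p = q \<or> q = r \<or> r = p"
  by (auto simp: orient3_def)

lemma cc_orient3_nonneg: "z \<in> cc p q \<Longrightarrow> 0 \<le> orient3 (vec_of p) (vec_of z) (vec_of q)"
  by (cases p; cases q; cases z)
    (auto simp: orient3_def wedge_def zero_le_mult_iff mult_le_0_iff split: if_splits)

lemma arc_orient3_sign:
  assumes "I \<in> {cc p q, cc q p}"
  obtains \<sigma> :: real where "\<sigma> \<noteq> 0"
    "\<And>z. z \<in> I \<Longrightarrow> 0 \<le> \<sigma> * orient3 (vec_of p) (vec_of z) (vec_of q)"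
proof (cases "I = cc p q")
  case True
  then show ?thesis
    using that[of 1] cc_orient3_nonneg by simp
next
  case False
  then have I: "I = cc q p"
    using assms by simp
  show ?thesis
  proof (rule that[of "-1"])
    fix z assume "z \<in> I"
    then show "0 \<le> -1 * orient3 (vec_of p) (vec_of z) (vec_of q)"
      using I cc_orient3_nonneg[of z q p] orient3_reverse[of "vec_of q" "vec_of z" "vec_of p"] by simp
  qed simp
qed

lemma orient3_sign_pt_of_middle:
  assumes "x \<noteq> 0"
  shows "0 \<le> \<sigma> * orient3 a (vec_of (pt_of x)) b \<longleftrightarrow> 0 \<le> \<sigma> * orient3 a x b"
proof -
  obtain c where "c \<noteq> 0" "vec_of (pt_of x) = c *\<^sub>R x"
    using vec_of_pt_of[OF assms] .
  moreover have "orient3 a (c *\<^sub>R x) b = c\<^sup>2 * orient3 a x b"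
    using orient3_scaleR[of 1 a c x 1 b] by simp
  ultimately show ?thesis
    using mult_le_cancel_left_pos[of "c\<^sup>2" 0 "\<sigma> * orient3 a x b"] by (simp add: mult.left_commute)
qed

lemma orient3_image_in_eigenbasis:
  fixes M :: mat2
  assumes "M *v u = m1 *\<^sub>R u" "M *v v = m2 *\<^sub>R v" and w: "w = s *\<^sub>R u + t *\<^sub>R v"
  shows "orient3 u (M *v w) w = - (t\<^sup>2 * m2 * (m1 - m2)) * orient3 u v w"
proof -
  have "M *v w = (s * m1) *\<^sub>R u + (t * m2) *\<^sub>R v"
    using assms by (simp add: matrix_vector_right_distrib matrix_vector_mult_scaleR)
  moreover have "wedge v u = - wedge u v"
    by (rule wedge_commute)
  ultimately show ?thesis
    by (simp add: orient3_def w wedge_bilinear power2_eq_square algebra_simps)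
qed

text \<open>M moves every point other than p and r away from r towards p. So an arc from p to q that
  contains r cannot be invariant: the image of its endpoint q leaves it, as the identity above shows
  on the sign of orient3.\<close>

lemma repeller_notin_invariant_arc:
  fixes M :: mat2
  assumes attract: "M *v vec_of p = m1 *\<^sub>R vec_of p" and repel: "M *v vec_of r = m2 *\<^sub>R vec_of r"
    and "0 < m2" "m2 < m1" and "q \<noteq> p" "q \<noteq> r"
    and arc: "I \<in> {cc p q, cc q p}" and invariant: "mobius M ` I \<subseteq> I"
  shows "r \<notin> I"
proof
  assume "r \<in> I"
  define u v w where "u = vec_of p" and "v = vec_of r" and "w = vec_of q"
  have "p \<noteq> r"
    using attract repel \<open>m2 < m1\<close> vec_of_neq_0 by (metis less_irrefl scaleR_cancel_right)
  then have "wedge u v \<noteq> 0" "wedge u w \<noteq> 0" "orient3 u v w \<noteq> 0"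
    using assms(5,6) by (auto simp: u_def v_def w_def orient3_vec_of_eq_0_iff)
  define k where "k = (wedge u w / wedge u v)\<^sup>2 * m2 * (m1 - m2)"
  have "k > 0"
    using \<open>wedge u v \<noteq> 0\<close> \<open>wedge u w \<noteq> 0\<close> \<open>0 < m2\<close> \<open>m2 < m1\<close> by (simp add: k_def)
  have identity: "orient3 u (M *v w) w = - k * orient3 u v w"
    unfolding k_def by (rule orient3_image_in_eigenbasis[OF attract[folded u_def] repel[folded v_def]
        wedge_decomposition[OF \<open>wedge u v \<noteq> 0\<close>]])
  obtain \<sigma> :: real where "\<sigma> \<noteq> 0" and sign: "\<And>z. z \<in> I \<Longrightarrow> 0 \<le> \<sigma> * orient3 u (vec_of z) w"
    using arc_orient3_sign[OF arc] unfolding u_def w_def by metis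
  have pos: "0 < \<sigma> * orient3 u v w"
    using sign[OF \<open>r \<in> I\<close>] \<open>\<sigma> \<noteq> 0\<close> \<open>orient3 u v w \<noteq> 0\<close> by (simp add: v_def order_le_less)
  have "M *v w \<noteq> 0"
    using identity \<open>k > 0\<close> \<open>orient3 u v w \<noteq> 0\<close> by (auto simp: orient3_def wedge_def)
  have "q \<in> I"
    using arc cc_endpoints by auto
  then have "pt_of (M *v w) \<in> I"
    using invariant by (auto simp: mobius_def w_def)
  then have "0 \<le> \<sigma> * orient3 u (M *v w) w"
    using sign orient3_sign_pt_of_middle[OF \<open>M *v w \<noteq> 0\<close>] by blast
  moreover have "\<sigma> * orient3 u (M *v w) w = - (k * (\<sigma> * orient3 u v w))"
    unfolding identity by simp
  moreover have "0 < k * (\<sigma> * orient3 u v w)"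
    using \<open>k > 0\<close> pos by simp
  ultimately show False
    by linarith
qed

section \<open>Coherently oriented hyperbolic pairs\<close>

lemma hyperbolic_fp_minus_notin_invariant_arc:
  fixes M :: mat2
  assumes "det M = 1" "trace M > 2" "q \<noteq> fp_plus M" "q \<noteq> fp_minus M"
    and "I \<in> {cc (fp_plus M) q, cc q (fp_plus M)}" "mobius M ` I \<subseteq> I"
  shows "fp_minus M \<notin> I"
proof -
  obtain l where "l > 1"
    "M *v vec_of (fp_plus M) = l *\<^sub>R vec_of (fp_plus M)"
    "M *v vec_of (fp_minus M) = (1 / l) *\<^sub>R vec_of (fp_minus M)"
    using hyperbolic_fixed_points[OF assms(1,2)] .
  moreover from \<open>l > 1\<close> have "0 < 1 / l" "1 / l < l"
    using less_1_mult[of l l] by (simp_all add: field_simps)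
  ultimately show ?thesis
    using repeller_notin_invariant_arc[of M _ l _ "1 / l"] assms(3-) by blast
qed

lemma hyperbolic_fp_plus_notin_inverse_invariant_arc:
  fixes M :: mat2
  assumes "det M = 1" "trace M > 2" "q \<noteq> fp_plus M" "q \<noteq> fp_minus M"
    and "I \<in> {cc (fp_minus M) q, cc q (fp_minus M)}" "mobius (matrix_inv M) ` I \<subseteq> I"
  shows "fp_plus M \<notin> I"
proof -
  obtain l where "l > 1"
    "M *v vec_of (fp_plus M) = l *\<^sub>R vec_of (fp_plus M)"
    "M *v vec_of (fp_minus M) = (1 / l) *\<^sub>R vec_of (fp_minus M)"
    using hyperbolic_fixed_points[OF assms(1,2)] .
  then have "matrix_inv M *v vec_of (fp_minus M) = l *\<^sub>R vec_of (fp_minus M)"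
    "matrix_inv M *v vec_of (fp_plus M) = (1 / l) *\<^sub>R vec_of (fp_plus M)"
    using matrix_inv_eigenvector assms(1) by force+
  moreover from \<open>l > 1\<close> have "0 < 1 / l" "1 / l < l"
    using less_1_mult[of l l] by (simp_all add: field_simps)
  ultimately show ?thesis
    using repeller_notin_invariant_arc[of "matrix_inv M" _ l _ "1 / l"] assms(3-) by blast
qed

lemma I_of_arc:
  assumes "p \<noteq> q" "\<exists>I \<in> {cc p q, cc q p}. invariant2 M N I"
  shows "I_of M N p q \<in> {cc p q, cc q p}" "mobius M ` I_of M N p q \<subseteq> I_of M N p q"
    "mobius N ` I_of M N p q \<subseteq> I_of M N p q"
proof -
  have "I_of M N p q \<in> {cc p q, cc q p} \<and> invariant2 M N (I_of M N p q)"
    unfolding I_of_def using assms by (simp del: insert_iff) (rule someI_ex, blast)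
  then show "I_of M N p q \<in> {cc p q, cc q p}" "mobius M ` I_of M N p q \<subseteq> I_of M N p q"
    "mobius N ` I_of M N p q \<subseteq> I_of M N p q"
    by (simp_all add: invariant2_def)
qed

lemma invariant2_swap: "invariant2 B A I \<longleftrightarrow> invariant2 A B I"
  by (auto simp: invariant2_def)

lemma I_of_swap: "I_of B A q p = I_of A B p q"
  unfolding I_of_def invariant2_swap[of B] by (simp add: insert_commute eq_commute)

lemma coherent_swap: "coherent B A \<longleftrightarrow> coherent A B"
  unfolding coherent_def invariant2_swap[of "matrix_inv B"] invariant2_swap[of B]
  by (simp add: insert_commute eq_commute)

locale coherent_hyperbolic_pair =
  fixes A B :: mat2
  assumes det_A: "det A = 1" and det_B: "det B = 1"
    and hyperbolic_A: "trace A > 2" and hyperbolic_B: "trace B > 2"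
    and coherent: "coherent A B"
    and distinct_axes: "{fp_plus A, fp_minus A} \<noteq> {fp_plus B, fp_minus B}"
begin

lemma swap: "coherent_hyperbolic_pair B A"
  using det_A det_B hyperbolic_A hyperbolic_B coherent distinct_axes
  by unfold_locales (auto simp: coherent_swap)

lemma I_plus_arc:
  assumes "fp_plus A \<noteq> fp_plus B"
  shows "I_plus A B \<in> {cc (fp_plus A) (fp_plus B), cc (fp_plus B) (fp_plus A)}"
    "mobius A ` I_plus A B \<subseteq> I_plus A B"
proof -
  have "\<exists>I \<in> {cc (fp_plus A) (fp_plus B), cc (fp_plus B) (fp_plus A)}. invariant2 A B I"
    using coherent assms unfolding coherent_def by blast
  from I_of_arc[OF assms this]
  show "I_plus A B \<in> {cc (fp_plus A) (fp_plus B), cc (fp_plus B) (fp_plus A)}"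
    "mobius A ` I_plus A B \<subseteq> I_plus A B"
    unfolding I_plus_def by blast+
qed

lemma I_minus_arc:
  assumes "fp_minus A \<noteq> fp_minus B"
  shows "I_minus A B \<in> {cc (fp_minus A) (fp_minus B), cc (fp_minus B) (fp_minus A)}"
    "mobius (matrix_inv A) ` I_minus A B \<subseteq> I_minus A B"
    "mobius (matrix_inv B) ` I_minus A B \<subseteq> I_minus A B"
proof -
  have "\<exists>I \<in> {cc (fp_minus A) (fp_minus B), cc (fp_minus B) (fp_minus A)}.
      invariant2 (matrix_inv A) (matrix_inv B) I"
    using coherent assms unfolding coherent_def by blast
  from I_of_arc[OF assms this]
  show "I_minus A B \<in> {cc (fp_minus A) (fp_minus B), cc (fp_minus B) (fp_minus A)}"
    "mobius (matrix_inv A) ` I_minus A B \<subseteq> I_minus A B"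
    "mobius (matrix_inv B) ` I_minus A B \<subseteq> I_minus A B"
    unfolding I_minus_def by blast+
qed

lemma I_plus_inter_I_minus_empty_if_fp_plus_eq:
  assumes eq: "fp_plus A = fp_plus B"
  shows "I_plus A B \<inter> I_minus A B = {}"
proof -
  have ne: "fp_minus A \<noteq> fp_minus B"
    using distinct_axes eq by auto
  have "fp_minus B \<noteq> fp_plus A"
    using hyperbolic_fp_plus_neq_fp_minus[OF det_B hyperbolic_B] eq by simp
  then have "fp_plus A \<notin> I_minus A B"
    using hyperbolic_fp_plus_notin_inverse_invariant_arc[OF det_A hyperbolic_A _ _
        I_minus_arc(1,2)[OF ne]] ne by metis
  then show ?thesis
    using eq by (simp add: I_plus_def I_of_def)
qed

lemma I_plus_inter_I_minus_empty_if_fp_minus_eq: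
  assumes eq: "fp_minus A = fp_minus B"
  shows "I_plus A B \<inter> I_minus A B = {}"
proof -
  have ne: "fp_plus A \<noteq> fp_plus B"
    using distinct_axes eq by auto
  have "fp_plus B \<noteq> fp_minus A"
    using hyperbolic_fp_plus_neq_fp_minus[OF det_B hyperbolic_B] eq by simp
  then have "fp_minus A \<notin> I_plus A B"
    using hyperbolic_fp_minus_notin_invariant_arc[OF det_A hyperbolic_A _ _
        I_plus_arc[OF ne]] ne by metis
  then show ?thesis
    using eq by (simp add: I_minus_def I_of_def)
qed

lemma I_plus_inter_I_minus_if_fp_plus_eq_fp_minus:
  assumes eq: "fp_plus A = fp_minus B"
  shows "I_plus A B \<inter> I_minus A B = {fp_plus A}"
proof -
  have A_distinct: "fp_plus A \<noteq> fp_minus A"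
    using hyperbolic_fp_plus_neq_fp_minus[OF det_A hyperbolic_A] .
  have ne_plus: "fp_plus A \<noteq> fp_plus B"
    using hyperbolic_fp_plus_neq_fp_minus[OF det_B hyperbolic_B] eq by simp
  have ne_minus: "fp_minus A \<noteq> fp_minus B"
    using A_distinct eq by simp
  have cross: "fp_minus A \<noteq> fp_plus B"
    using distinct_axes eq by auto
  have "fp_minus A \<notin> I_plus A B"
    using hyperbolic_fp_minus_notin_invariant_arc[OF det_A hyperbolic_A _ _
        I_plus_arc[OF ne_plus]] ne_plus cross by metis
  moreover have "fp_plus B \<notin> I_minus A B"
    using hyperbolic_fp_plus_notin_inverse_invariant_arc[OF det_B hyperbolic_B _ _ _
        I_minus_arc(3)[OF ne_minus]] I_minus_arc(1)[OF ne_minus] A_distinct cross eq by auto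
  ultimately show ?thesis
    using arcs_with_common_endpoint_inter[OF A_distinct ne_plus cross _ _ _]
      I_plus_arc(1)[OF ne_plus] I_minus_arc(1)[OF ne_minus] eq by auto
qed

lemma I_plus_inter_I_minus_if_fp_minus_eq_fp_plus:
  assumes "fp_minus A = fp_plus B"
  shows "I_plus A B \<inter> I_minus A B = {fp_minus A}"
  using coherent_hyperbolic_pair.I_plus_inter_I_minus_if_fp_plus_eq_fp_minus[OF swap] assms
  by (simp add: I_plus_def I_minus_def I_of_swap Int_commute)

end

section \<open>Powers, rotations and Lyndon words\<close>

lemma wpow_0 [simp]: "wpow w 0 = []"
  and wpow_Suc: "wpow w (Suc n) = w @ wpow w n"
  by (simp_all add: wpow_def)

lemma wpow_1 [simp]: "wpow w 1 = w"
  by (simp add: wpow_def)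

lemma length_wpow [simp]: "length (wpow w n) = n * length w"
  by (induction n) (simp_all add: wpow_Suc)

lemma count_list_wpow [simp]: "count_list (wpow w n) x = n * count_list w x"
  by (induction n) (simp_all add: wpow_Suc)

lemma wpow_singleton [simp]: "wpow [x] n = replicate n x"
  by (simp add: wpow_def)

lemma wpow_mult: "wpow (wpow v a) b = wpow v (a * b)"
  by (induction b) (simp_all add: wpow_Suc wpow_def replicate_add)

lemma wpow_Cons_snoc: "wpow (x # v) m @ [x] = x # wpow (v @ [x]) m"
  by (induction m) (simp_all add: wpow_Suc)

lemma rotate1_wpow: "rotate1 (wpow v m) = wpow (rotate1 v) m"
proof (cases v)
  case (Cons x v')
  then show ?thesis
    by (cases m) (simp_all add: wpow_Suc flip: wpow_Cons_snoc)
qed simp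

lemma rotate_wpow: "rotate k (wpow v m) = wpow (rotate k v) m"
  by (induction k) (simp_all add: rotate1_wpow)

lemma rotate_back: "\<exists>k. rotate k (rotate j w) = w"
proof (cases "w = []")
  case False
  then have "j mod length w < length w"
    by simp
  then have "rotate (length w - j mod length w) (rotate (j mod length w) w) = w"
    by (simp add: rotate_rotate)
  then show ?thesis
    by (metis rotate_conv_mod)
qed simp

lemma length_eq_count_list_letters: "length w = count_list w La + count_list w Lb"
proof (induction w)
  case (Cons x w)
  then show ?case
    by (cases x) simp_all
qed simp

lemma replicate_if_count_list_eq_0:
  fixes x y :: letter
  assumes "count_list w y = 0" "x \<noteq> y"
  shows "w = replicate (length w) x"
proof -
  have "z = x" if "z \<in> set w" for z
    using assms that by (cases x; cases y; cases z) (auto simp: count_list_0_iff)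
  then show ?thesis
    by (simp add: replicate_length_same)
qed

lemma lyndon_singleton: "lyndon [x]"
  by (simp add: lyndon_def)

lemma lexord_letter_less_total:
  "(u, v) \<in> lexord letter_less \<or> u = v \<or> (v, u) \<in> lexord letter_less"
  unfolding letter_less_def by (rule lexord_linear) (metis insertI1 letter.exhaust)

lemma ex_lexord_least_rotation:
  obtains j where "\<And>k. (rotate k (rotate j w), rotate j w) \<notin> lexord letter_less"
proof -
  have "wf (lex letter_less)"
    by (auto simp: letter_less_def)
  moreover have "w \<in> range (\<lambda>j. rotate j w)"
    by (metis rangeI rotate0 id_apply)
  ultimately obtain L where "L \<in> range (\<lambda>j. rotate j w)"
    and least: "\<And>u. (u, L) \<in> lex letter_less \<Longrightarrow> u \<notin> range (\<lambda>j. rotate j w)"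
    by (rule wfE_min) blast
  then obtain j where L: "L = rotate j w"
    by blast
  have "(rotate k L, L) \<notin> lexord letter_less" for k
    using least[of "rotate k L"] by (auto simp: L lexord_lex rotate_rotate)
  then show ?thesis
    using that L by blast
qed

lemma lyndon_if_least_primitive_rotation:
  assumes "L \<noteq> []" and least: "\<And>k. (rotate k L, L) \<notin> lexord letter_less"
    and primitive: "\<And>k. 0 < k \<Longrightarrow> k < length L \<Longrightarrow> rotate k L \<noteq> L"
  shows "lyndon L"
  unfolding lyndon_def using assms lexord_letter_less_total by blast

lemma proper_power_if_rotate_fixed:
  assumes "0 < k" "k < length L" "rotate k L = L"
  obtains z m where "1 < m" "L = wpow z m" "z \<noteq> []" "length z < length L"
proof -
  have "take k L @ drop k L = drop k L @ take k L" "take k L \<noteq> []" "drop k L \<noteq> []"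
    using assms by (auto simp: rotate_drop_take)
  then obtain m z where "1 < m" and L: "L = wpow z m"
    using comm_append_is_replicate[of "take k L" "drop k L"] by (auto simp: wpow_def)
  moreover from this have "z \<noteq> []"
    using assms(2) by auto
  moreover from calculation have "length z < length L"
    by (metis L length_greater_0_conv length_wpow mult.left_neutral mult_less_mono1)
  ultimately show thesis
    using that by blast
qed

text \<open>The lexicographically least rotation of w is a Lyndon word unless a proper rotation fixes
  it, and then it is a proper power of a shorter word.\<close>

theorem ex_lyndon_power_of_rotation:
  "w \<noteq> [] \<Longrightarrow> \<exists>v k n. lyndon v \<and> n \<ge> 1 \<and> w = wpow (rotate k v) n"
proof (induction "length w" arbitrary: w rule: less_induct)
  case less
  obtain j where least: "\<And>k. (rotate k (rotate j w), rotate j w) \<notin> lexord letter_less"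
    using ex_lexord_least_rotation[of w] by blast
  define L where "L = rotate j w"
  obtain i where w: "w = rotate i L"
    using rotate_back unfolding L_def by metis
  show ?case
  proof (cases "\<exists>k. 0 < k \<and> k < length L \<and> rotate k L = L")
    case False
    have "lyndon L"
    proof (rule lyndon_if_least_primitive_rotation)
      show "L \<noteq> []"
        using less.prems by (simp add: L_def)
      show "(rotate k L, L) \<notin> lexord letter_less" for k
        using least by (simp add: L_def)
      show "rotate k L \<noteq> L" if "0 < k" "k < length L" for k
        using False that by blast
    qed
    then show ?thesis
      using w by (metis wpow_1 order_refl)
  next
    case True
    then obtain z m where "1 < m" "L = wpow z m" "z \<noteq> []" "length z < length L"
      using proper_power_if_rotate_fixed by blast
    moreover obtain v k' n where "lyndon v" "n \<ge> 1" and z: "z = wpow (rotate k' v) n"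
      using less.hyps \<open>z \<noteq> []\<close> \<open>length z < length L\<close> by (force simp: L_def)
    ultimately have "w = rotate i (wpow (wpow (rotate k' v) n) m)"
      using w by simp
    also have "\<dots> = wpow (rotate (i + k') v) (n * m)"
      by (simp add: rotate_wpow wpow_mult rotate_rotate)
    finally have "w = wpow (rotate (i + k') v) (n * m)" .
    moreover have "n * m \<ge> 1"
      using \<open>n \<ge> 1\<close> \<open>m > 1\<close> by simp
    ultimately show ?thesis
      using \<open>lyndon v\<close> by blast
  qed
qed

section \<open>Optimal words over a common eigenvector\<close>

lemma complete_optimal_letters:
  assumes "\<And>x. x \<in> X \<Longrightarrow> maximal A B [x]"
    and "\<And>w. maximal A B w \<Longrightarrow> \<exists>x \<in> X. w = replicate (length w) x"
  shows "complete_optimal A B ((\<lambda>x. [x]) ` X)"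
  unfolding complete_optimal_def
proof (intro conjI allI impI)
  show "\<forall>v \<in> (\<lambda>x. [x]) ` X. lyndon v \<and> maximal A B v"
    using assms(1) lyndon_singleton by auto
next
  fix w assume max: "maximal A B w"
  then obtain x where "x \<in> X" "w = replicate (length w) x"
    using assms(2) by blast
  moreover have "length w \<ge> 1"
    using max by (cases w) (auto simp: maximal_def)
  ultimately show "\<exists>v \<in> (\<lambda>x. [x]) ` X. \<exists>k n. n \<ge> 1 \<and> w = wpow (rotate k v) n"
    by (intro bexI[of _ "[x]"] exI[of _ 0] exI[of _ "length w"]) auto
qed

lemma complete_optimal_lyndon:
  assumes "\<And>w. w \<noteq> [] \<Longrightarrow> maximal A B w"
  shows "complete_optimal A B {w. lyndon w}"
  using assms ex_lyndon_power_of_rotation unfolding complete_optimal_def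
  by (auto simp: lyndon_def maximal_def)

text \<open>If A and B have eigenvalues exp a and exp b at a common eigenvector, the matrix of w has
  eigenvalue exp (weight a b w) there.\<close>

definition weight :: "real \<Rightarrow> real \<Rightarrow> letter list \<Rightarrow> real" where
  "weight a b w = real (count_list w La) * a + real (count_list w Lb) * b"

lemma weight_Nil [simp]: "weight a b [] = 0"
  and weight_singleton [simp]: "weight a b [La] = a" "weight a b [Lb] = b"
  by (simp_all add: weight_def)

lemma weight_Cons [simp]:
  "weight a b (x # w) = (case x of La \<Rightarrow> a | Lb \<Rightarrow> b) + weight a b w"
  by (cases x) (simp_all add: weight_def algebra_simps)

lemma weight_wpow: "weight a b (wpow w n) = real n * weight a b w"
  by (simp add: weight_def algebra_simps)

lemma abs_weight_le: "\<bar>weight a b w\<bar> \<le> real (count_list w La) * \<bar>a\<bar> + real (count_list w Lb) * \<bar>b\<bar>"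
  unfolding weight_def by (metis abs_mult abs_of_nat abs_triangle_ineq)

lemma abs_weight_le_length: "\<bar>weight a b w\<bar> \<le> real (length w) * max \<bar>a\<bar> \<bar>b\<bar>"
proof -
  have "real (count_list w La) * \<bar>a\<bar> \<le> real (count_list w La) * max \<bar>a\<bar> \<bar>b\<bar>"
    "real (count_list w Lb) * \<bar>b\<bar> \<le> real (count_list w Lb) * max \<bar>a\<bar> \<bar>b\<bar>"
    by (simp_all add: mult_left_mono)
  then show ?thesis
    using abs_weight_le[of a b w] by (simp add: length_eq_count_list_letters[of w] algebra_simps)
qed

lemma cosh_le_cosh_iff: "cosh (x::real) \<le> cosh y \<longleftrightarrow> \<bar>x\<bar> \<le> \<bar>y\<bar>"
  by (metis abs_ge_zero cosh_real_abs cosh_real_nonneg_le_iff)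

locale common_eigenvector =
  fixes A B :: mat2 and e :: "real^2" and \<alpha> \<beta> :: real
  assumes det_A: "det A = 1" and det_B: "det B = 1" and e_neq_0: "e \<noteq> 0"
    and eigen_A: "A *v e = \<alpha> *\<^sub>R e" and eigen_B: "B *v e = \<beta> *\<^sub>R e"
    and pos_A: "\<alpha> > 0" and pos_B: "\<beta> > 0"
begin

abbreviation log_eigenvalue :: "letter list \<Rightarrow> real" where
  "log_eigenvalue \<equiv> weight (ln \<alpha>) (ln \<beta>)"

lemma phi_eigenvector: "phi A B w *v e = exp (log_eigenvalue w) *\<^sub>R e"
proof (induction w)
  case (Cons x w)
  have "phi A B (x # w) *v e = gmat A B x *v (phi A B w *v e)"
    by (simp add: phi_def matrix_vector_mul_assoc)
  then show ?case
    by (cases x) (simp_all add: Cons gmat_def eigen_A eigen_B exp_add pos_A pos_B algebra_simps)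
qed (simp add: phi_def)

lemma det_phi: "det (phi A B w) = 1"
  by (induction w) (simp_all add: phi_def det_mul gmat_def det_A det_B split: letter.split)

lemma wtr_eq_cosh: "wtr A B w = 2 * cosh (log_eigenvalue w)"
  using eigenvalue_add_inverse_eq_trace[OF det_phi e_neq_0 phi_eigenvector]
  by (simp add: wtr_def cosh_def exp_minus field_simps)

lemma trace_eq_cosh: "trace A = 2 * cosh (ln \<alpha>)" "trace B = 2 * cosh (ln \<beta>)"
  using wtr_eq_cosh[of "[La]"] wtr_eq_cosh[of "[Lb]"] by (simp_all add: wtr_def phi_def gmat_def)

lemma trace_le_trace_iff:
  "trace A \<le> trace B \<longleftrightarrow> \<bar>ln \<alpha>\<bar> \<le> \<bar>ln \<beta>\<bar>" "trace B \<le> trace A \<longleftrightarrow> \<bar>ln \<beta>\<bar> \<le> \<bar>ln \<alpha>\<bar>"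
  by (simp_all add: trace_eq_cosh cosh_le_cosh_iff)

lemma trace_eq_trace_iff: "trace A = trace B \<longleftrightarrow> \<bar>ln \<alpha>\<bar> = \<bar>ln \<beta>\<bar>"
  using trace_le_trace_iff by (metis order.eq_iff)

lemma wle_iff:
  "wle A B u w \<longleftrightarrow> real (length w) * \<bar>log_eigenvalue u\<bar> \<le> real (length u) * \<bar>log_eigenvalue w\<bar>"
  by (simp add: wle_def wtr_eq_cosh weight_wpow cosh_le_cosh_iff abs_mult)

lemma maximal_iff:
  "maximal A B w \<longleftrightarrow> w \<noteq> [] \<and> \<bar>log_eigenvalue w\<bar> = real (length w) * max \<bar>ln \<alpha>\<bar> \<bar>ln \<beta>\<bar>"
proof
  assume "maximal A B w"
  then have "w \<noteq> []" "wle A B [La] w" "wle A B [Lb] w"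
    by (auto simp: maximal_def)
  then show "w \<noteq> [] \<and> \<bar>log_eigenvalue w\<bar> = real (length w) * max \<bar>ln \<alpha>\<bar> \<bar>ln \<beta>\<bar>"
    using abs_weight_le_length[of "ln \<alpha>" "ln \<beta>" w] by (auto simp: wle_iff max_def)
next
  assume "w \<noteq> [] \<and> \<bar>log_eigenvalue w\<bar> = real (length w) * max \<bar>ln \<alpha>\<bar> \<bar>ln \<beta>\<bar>"
  then show "maximal A B w"
    using abs_weight_le_length[of "ln \<alpha>" "ln \<beta>"]
    by (auto simp: maximal_def wle_iff mult.left_commute[of "real (length w)"] intro: mult_left_mono)
qed

lemma maximal_replicate_dominant:
  assumes dominant: "\<bar>log_eigenvalue [y]\<bar> < \<bar>log_eigenvalue [x]\<bar>" and "maximal A B w"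
  shows "w = replicate (length w) x"
proof -
  have "x \<noteq> y"
    using dominant by auto
  then have "length w = count_list w x + count_list w y"
    and "\<bar>log_eigenvalue w\<bar> \<le>
      real (count_list w x) * \<bar>log_eigenvalue [x]\<bar> + real (count_list w y) * \<bar>log_eigenvalue [y]\<bar>"
    and "max \<bar>ln \<alpha>\<bar> \<bar>ln \<beta>\<bar> = \<bar>log_eigenvalue [x]\<bar>"
    using dominant length_eq_count_list_letters[of w] abs_weight_le[of "ln \<alpha>" "ln \<beta>" w]
    by (cases x; cases y; simp)+
  then have "real (count_list w y) * (\<bar>log_eigenvalue [x]\<bar> - \<bar>log_eigenvalue [y]\<bar>) \<le> 0"
    using \<open>maximal A B w\<close> by (simp add: maximal_iff algebra_simps)
  then have "count_list w y = 0"
    using dominant by (simp add: mult_le_0_iff)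
  then show ?thesis
    using replicate_if_count_list_eq_0 \<open>x \<noteq> y\<close> by blast
qed

lemma maximal_replicate_opposite:
  assumes "ln \<beta> = - ln \<alpha>" "ln \<alpha> \<noteq> 0" "maximal A B w"
  shows "w = replicate (length w) La \<or> w = replicate (length w) Lb"
proof -
  let ?a = "real (count_list w La)" and ?b = "real (count_list w Lb)"
  have "log_eigenvalue w = (?a - ?b) * ln \<alpha>"
    using assms(1) by (simp add: weight_def algebra_simps)
  moreover have "\<bar>log_eigenvalue w\<bar> = (?a + ?b) * \<bar>ln \<alpha>\<bar>"
    using assms(1,3) maximal_iff[of w] length_eq_count_list_letters[of w] by simp
  ultimately have "?a + ?b = \<bar>?a - ?b\<bar>"
    using assms(2) by (simp add: abs_mult)
  then have "count_list w La = 0 \<or> count_list w Lb = 0"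
    by linarith
  then show ?thesis
    using replicate_if_count_list_eq_0 by blast
qed

lemma complete_optimal_dominant_letter:
  assumes "\<bar>log_eigenvalue [y]\<bar> < \<bar>log_eigenvalue [x]\<bar>"
  shows "complete_optimal A B {[x]}"
proof -
  have "maximal A B [x]"
    using assms by (cases x; cases y) (auto simp: maximal_iff)
  then show ?thesis
    using complete_optimal_letters[of "{x}"] maximal_replicate_dominant[OF assms] by simp
qed

lemma optimal_words_unequal_traces:
  assumes "trace A \<noteq> trace B"
  shows "complete_optimal A B {if trace A > trace B then [La] else [Lb]}"
proof (cases "trace A > trace B")
  case True
  then have "\<bar>ln \<beta>\<bar> < \<bar>ln \<alpha>\<bar>"
    using trace_le_trace_iff(1) by (simp flip: not_le)
  then show ?thesis
    using True complete_optimal_dominant_letter[of Lb La] by simp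
next
  case False
  then have "\<bar>ln \<alpha>\<bar> < \<bar>ln \<beta>\<bar>"
    using assms trace_le_trace_iff(2) by (simp flip: not_le)
  then show ?thesis
    using False complete_optimal_dominant_letter[of La Lb] by simp
qed

lemma optimal_words_equal_traces_same_sign:
  assumes "trace A = trace B" "0 < ln \<alpha> * ln \<beta>"
  shows "(\<forall>w. w \<noteq> [] \<longrightarrow> maximal A B w) \<and> complete_optimal A B {w. lyndon w}"
proof -
  have "ln \<beta> = ln \<alpha>"
    using assms trace_eq_trace_iff by (auto simp: abs_if zero_less_mult_iff split: if_splits)
  then have "maximal A B w" if "w \<noteq> []" for w
    using that length_eq_count_list_letters[of w]
    by (simp add: maximal_iff weight_def abs_mult flip: distrib_right)
  then show ?thesis
    using complete_optimal_lyndon by blast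
qed

lemma optimal_words_equal_traces_opposite_sign:
  assumes "trace A = trace B" "ln \<alpha> * ln \<beta> < 0"
  shows "complete_optimal A B {[La], [Lb]}"
proof -
  have opposite: "ln \<beta> = - ln \<alpha>" "ln \<alpha> \<noteq> 0"
    using assms trace_eq_trace_iff by (auto simp: abs_if mult_less_0_iff split: if_splits)
  have "maximal A B [La]" "maximal A B [Lb]"
    using opposite by (simp_all add: maximal_iff)
  then have "complete_optimal A B ((\<lambda>x. [x]) ` {La, Lb})"
    using complete_optimal_letters[of "{La, Lb}"] maximal_replicate_opposite[OF opposite] by blast
  then show ?thesis
    by simp
qed

end

section \<open>Asymptotically parallel axes and parabolic generators\<close>

context coherent_hyperbolic_pair
begin

lemma shared_fixed_point_cases:
  assumes "{fp_plus A, fp_minus A} \<inter> {fp_plus B, fp_minus B} \<noteq> {}"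
  obtains (same_type) e \<alpha> \<beta> where "common_eigenvector A B e \<alpha> \<beta>" "0 < ln \<alpha> * ln \<beta>"
      "I_plus A B \<inter> I_minus A B = {}"
  | (opposite_type) e \<alpha> \<beta> p where "common_eigenvector A B e \<alpha> \<beta>" "ln \<alpha> * ln \<beta> < 0"
      "I_plus A B \<inter> I_minus A B = {p}"
proof -
  obtain a where a: "a > 1" "A *v vec_of (fp_plus A) = a *\<^sub>R vec_of (fp_plus A)"
    "A *v vec_of (fp_minus A) = (1 / a) *\<^sub>R vec_of (fp_minus A)"
    using hyperbolic_fixed_points[OF det_A hyperbolic_A] .
  obtain b where b: "b > 1" "B *v vec_of (fp_plus B) = b *\<^sub>R vec_of (fp_plus B)"
    "B *v vec_of (fp_minus B) = (1 / b) *\<^sub>R vec_of (fp_minus B)"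
    using hyperbolic_fixed_points[OF det_B hyperbolic_B] .
  have eigen: "common_eigenvector A B (vec_of p) \<alpha> \<beta>"
    if "A *v vec_of p = \<alpha> *\<^sub>R vec_of p" "B *v vec_of p = \<beta> *\<^sub>R vec_of p" "\<alpha> > 0" "\<beta> > 0" for p \<alpha> \<beta>
    using that det_A det_B vec_of_neq_0 by unfold_locales
  have "0 < ln a" "0 < ln b" "ln (1 / a) < 0" "ln (1 / b) < 0"
    using a(1) b(1) by (simp_all add: ln_div)
  from assms consider "fp_plus A = fp_plus B" | "fp_minus A = fp_minus B"
    | "fp_plus A = fp_minus B" | "fp_minus A = fp_plus B"
    by blast
  then show thesis
  proof cases
    case 1
    then show thesis
      using same_type[OF eigen[of "fp_plus A" a b]] a b \<open>0 < ln a\<close> \<open>0 < ln b\<close>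
        I_plus_inter_I_minus_empty_if_fp_plus_eq by simp
  next
    case 2
    then show thesis
      using same_type[OF eigen[of "fp_minus A" "1 / a" "1 / b"]] a b \<open>ln (1 / a) < 0\<close> \<open>ln (1 / b) < 0\<close>
        I_plus_inter_I_minus_empty_if_fp_minus_eq by (simp add: mult_neg_neg)
  next
    case 3
    then show thesis
      using opposite_type[OF eigen[of "fp_plus A" a "1 / b"]] a b \<open>0 < ln a\<close> \<open>ln (1 / b) < 0\<close>
        I_plus_inter_I_minus_if_fp_plus_eq_fp_minus by (simp add: mult_pos_neg)
  next
    case 4
    then show thesis
      using opposite_type[OF eigen[of "fp_minus A" "1 / a" b]] a b \<open>ln (1 / a) < 0\<close> \<open>0 < ln b\<close>
        I_plus_inter_I_minus_if_fp_minus_eq_fp_plus by (simp add: mult_neg_pos)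
  qed
qed

lemma optimal_words_asymptotically_parallel:
  assumes "{fp_plus A, fp_minus A} \<inter> {fp_plus B, fp_minus B} \<noteq> {}"
  shows "(trace A \<noteq> trace B \<longrightarrow>
           complete_optimal A B {if trace A > trace B then [La] else [Lb]}) \<and>
        (trace A = trace B \<and> I_plus A B \<inter> I_minus A B = {} \<longrightarrow>
           (\<forall>w. w \<noteq> [] \<longrightarrow> maximal A B w) \<and> complete_optimal A B {w. lyndon w}) \<and>
        (trace A = trace B \<and> I_plus A B \<inter> I_minus A B \<noteq> {} \<longrightarrow>
           (\<exists>p. I_plus A B \<inter> I_minus A B = {p}) \<and> complete_optimal A B {[La], [Lb]})"
  using assms
proof (cases rule: shared_fixed_point_cases)
  case (same_type e \<alpha> \<beta>)
  then show ?thesis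
    using common_eigenvector.optimal_words_unequal_traces
      common_eigenvector.optimal_words_equal_traces_same_sign by blast
next
  case (opposite_type e \<alpha> \<beta> p)
  then show ?thesis
    using common_eigenvector.optimal_words_unequal_traces
      common_eigenvector.optimal_words_equal_traces_opposite_sign by blast
qed

end

lemma optimal_words_parabolic:
  fixes A B :: mat2
  assumes "det A = 1" "det B = 1" "trace A = 2" "A \<noteq> mat 1" "trace B > 2"
    and "fp_plus A \<in> {fp_plus B, fp_minus B}"
  shows "complete_optimal A B {[Lb]}"
proof -
  obtain b where b: "b > 1" "B *v vec_of (fp_plus B) = b *\<^sub>R vec_of (fp_plus B)"
    "B *v vec_of (fp_minus B) = (1 / b) *\<^sub>R vec_of (fp_minus B)"
    using hyperbolic_fixed_points[OF assms(2,5)] .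
  then obtain \<beta> where "B *v vec_of (fp_plus A) = \<beta> *\<^sub>R vec_of (fp_plus A)" "\<beta> > 0"
    using assms(6) by (metis divide_pos_pos insertE order.strict_trans zero_less_one singletonD)
  moreover have "A *v vec_of (fp_plus A) = 1 *\<^sub>R vec_of (fp_plus A)"
    using parabolic_fixed_point[OF assms(1,3,4)] by simp
  ultimately interpret common_eigenvector A B "vec_of (fp_plus A)" 1 \<beta>
    using assms(1,2) vec_of_neq_0 by unfold_locales auto
  show ?thesis
    using optimal_words_unequal_traces assms(3,5) by simp
qed

theorem theorem3p5:
  fixes A B :: mat2
  assumes detA: "det A = 1" and detB: "det B = 1"
    and noncomm: "A ** B \<noteq> B ** A"
    and trA: "trace A \<ge> 2" and trB: "trace B \<ge> 2"
    and coh: "coherent A B"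
    and hypB: "trace B > 2"
  shows
    "(trace A > 2 \<and>
      {fp_plus A, fp_minus A} \<noteq> {fp_plus B, fp_minus B} \<and>
      {fp_plus A, fp_minus A} \<inter> {fp_plus B, fp_minus B} \<noteq> {} \<longrightarrow>
        (trace A \<noteq> trace B \<longrightarrow>
           complete_optimal A B {if trace A > trace B then [La] else [Lb]}) \<and>
        (trace A = trace B \<and> I_plus A B \<inter> I_minus A B = {} \<longrightarrow>
           (\<forall>w. w \<noteq> [] \<longrightarrow> maximal A B w) \<and> complete_optimal A B {w. lyndon w}) \<and>
        (trace A = trace B \<and> I_plus A B \<inter> I_minus A B \<noteq> {} \<longrightarrow>
           (\<exists>p. I_plus A B \<inter> I_minus A B = {p}) \<and> complete_optimal A B {[La], [Lb]}))
     \<and>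
     (trace A = 2 \<and> A \<noteq> mat 1 \<and> fp_plus A \<in> {fp_plus B, fp_minus B} \<longrightarrow>
        complete_optimal A B {[Lb]})"
proof -
  have "coherent_hyperbolic_pair A B"
    if "trace A > 2" "{fp_plus A, fp_minus A} \<noteq> {fp_plus B, fp_minus B}"
    using that detA detB hypB coh by unfold_locales
  then show ?thesis
    using coherent_hyperbolic_pair.optimal_words_asymptotically_parallel
      optimal_words_parabolic[OF detA detB _ _ hypB] by blast
qed

end
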